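(* Let $A\in\mathbb R^{n\times n}$ be symmetric, $b\in\mathbb R^n$, $-\infty<\alpha<\beta<+\infty$. Then the two-sided trust region subproblem \[ ({\rm TTRS})\quad \min_x\ \tfrac12x^TAx+b^Tx\quad\text{s.t.}\quad \alpha\le x^Tx\le\beta \] is equivalent to \[ ({\rm CTTRS})\quad \min_{x,t}\ \tfrac12x^T(A-\lambda_{\min}(A)I)x+b^Tx+\tfrac12\lambda_{\min}(A)t\quad\text{s.t.}\quad \alpha\le t\le\beta,\quad \left\|\begin{pmatrix}x\\ \frac{t-1}{2}\end{pmatrix}\right\|\le\frac{t+1}{2}, \] in the sense that $x^*$ globally solves (TTRS) if and only if $(x^*,t^* ):=(x^*,x^{*T}x^* )$ globally solves (CTTRS).
   Context: $\lambda_{\min}(A)$ is the smallest eigenvalue of $A$; $\|\cdot\|$ is the Euclidean norm. *)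

theory Defs
  imports "HOL-Analysis.Analysis"
begin

definition is_eigenvalue :: "real^'n^'n \<Rightarrow> real \<Rightarrow> bool" where
  "is_eigenvalue A l \<longleftrightarrow> (\<exists>v. v \<noteq> 0 \<and> A *v v = l *\<^sub>R v)"

definition lambda_min :: "real^'n^'n \<Rightarrow> real" where
  "lambda_min A = Min {l. is_eigenvalue A l}"

definition ttrs_obj :: "real^'n^'n \<Rightarrow> real^'n \<Rightarrow> real^'n \<Rightarrow> real" where
  "ttrs_obj A b x = 1/2 * (x \<bullet> (A *v x)) + b \<bullet> x"

definition ttrs_feas :: "real \<Rightarrow> real \<Rightarrow> real^'n \<Rightarrow> bool" where
  "ttrs_feas \<alpha> \<beta> x \<longleftrightarrow> \<alpha> \<le> x \<bullet> x \<and> x \<bullet> x \<le> \<beta>"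

definition ttrs_global_sol :: "real^'n^'n \<Rightarrow> real^'n \<Rightarrow> real \<Rightarrow> real \<Rightarrow> real^'n \<Rightarrow> bool" where
  "ttrs_global_sol A b \<alpha> \<beta> x \<longleftrightarrow>
     ttrs_feas \<alpha> \<beta> x \<and> (\<forall>y. ttrs_feas \<alpha> \<beta> y \<longrightarrow> ttrs_obj A b x \<le> ttrs_obj A b y)"

text \<open>(CTTRS). The stacked vector (x, (t-1)/2) is the pair in real^'n \<times> real,
  whose norm is the Euclidean norm sqrt(|x|^2 + ((t-1)/2)^2).\<close>
definition cttrs_obj :: "real^'n^'n \<Rightarrow> real^'n \<Rightarrow> real^'n \<Rightarrow> real \<Rightarrow> real" where
  "cttrs_obj A b x t =
     1/2 * (x \<bullet> ((A - lambda_min A *\<^sub>R mat 1) *v x)) + b \<bullet> x + 1/2 * lambda_min A * t"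

definition cttrs_feas :: "real \<Rightarrow> real \<Rightarrow> real^'n \<Rightarrow> real \<Rightarrow> bool" where
  "cttrs_feas \<alpha> \<beta> x t \<longleftrightarrow> \<alpha> \<le> t \<and> t \<le> \<beta> \<and> norm (x, (t - 1) / 2) \<le> (t + 1) / 2"

definition cttrs_global_sol :: "real^'n^'n \<Rightarrow> real^'n \<Rightarrow> real \<Rightarrow> real \<Rightarrow> real^'n \<Rightarrow> real \<Rightarrow> bool" where
  "cttrs_global_sol A b \<alpha> \<beta> x t \<longleftrightarrow>
     cttrs_feas \<alpha> \<beta> x t \<and>
     (\<forall>y s. cttrs_feas \<alpha> \<beta> y s \<longrightarrow> cttrs_obj A b x t \<le> cttrs_obj A b y s)"

end

theory Submission imports Defs begin

text \<open>Write \<lambda> for the smallest eigenvalue of A. The objective of (CTTRS) is the objective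
  of (TTRS) plus \<lambda>/2 (t - x\<bullet>x), and its cone constraint just says x\<bullet>x \<le> t; so (CTTRS)
  at (x, x\<bullet>x) is (TTRS) at x, and it remains to move any feasible (y, s) onto the sphere
  x\<bullet>x = s without increasing the objective. Stepping along a \<lambda>-eigenvector u with b\<bullet>u \<le> 0
  does this: on that line the quadratic form grows by exactly \<lambda> times the growth of x\<bullet>x,
  which the term \<lambda>/2 t pays for, while the linear term does not grow. That \<lambda> exists and is
  an eigenvalue comes from minimising the Rayleigh quotient over the unit sphere.\<close>

lemma inner_matrix_vector_symmetric:
  fixes A :: "real^'n^'n"
  assumes "transpose A = A"
  shows "x \<bullet> (A *v y) = y \<bullet> (A *v x)"
proof -
  have "x \<bullet> (A *v y) = (transpose A *v x) \<bullet> y"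
    by (simp add: dot_lmul_matrix)
  then show ?thesis
    using assms by (simp add: inner_commute)
qed

lemma transpose_diff: "transpose (A - B) = transpose A - transpose B"
  by (simp add: transpose_def vec_eq_iff)

lemma inner_shifted_matrix_vector:
  fixes A :: "real^'n^'n"
  shows "x \<bullet> ((A - \<mu> *\<^sub>R mat 1) *v x) = x \<bullet> (A *v x) - \<mu> * (x \<bullet> x)"
  by (simp add: matrix_vector_mult_diff_rdistrib scaleR_matrix_vector_assoc[symmetric]
      inner_diff_right)

lemma psd_quadratic_form_zero_imp_kernel:
  fixes B :: "real^'n^'n"
  assumes symB: "transpose B = B"
    and psd: "\<And>x. 0 \<le> x \<bullet> (B *v x)"
    and zero: "v \<bullet> (B *v v) = 0"
  shows "B *v v = 0"
proof (rule ccontr)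
  define w where "w = B *v v"
  assume "B *v v \<noteq> 0"
  then have w_pos: "w \<bullet> w > 0"
    by (simp add: w_def)
  have expand: "(v - t *\<^sub>R w) \<bullet> (B *v (v - t *\<^sub>R w)) = t\<^sup>2 * (w \<bullet> (B *v w)) - 2 * t * (w \<bullet> w)"
    for t
    using zero inner_matrix_vector_symmetric[OF symB, of v w]
    by (simp add: w_def[symmetric] power2_eq_square algebra_simps)
  define t where "t = (w \<bullet> w) / (w \<bullet> (B *v w) + 1)"
  have "t > 0"
    using w_pos psd[of w] by (simp add: t_def)
  moreover have "t * (w \<bullet> (B *v w)) < w \<bullet> w"
    using w_pos psd[of w] by (simp add: t_def field_simps)
  ultimately have "t * (t * (w \<bullet> (B *v w)) - w \<bullet> w) < 0" and "0 < t * (w \<bullet> w)"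
    using w_pos by (auto intro: mult_pos_neg)
  moreover have "t\<^sup>2 * (w \<bullet> (B *v w)) - 2 * t * (w \<bullet> w) = t * (t * (w \<bullet> (B *v w)) - w \<bullet> w) - t * (w \<bullet> w)"
    by (simp add: power2_eq_square algebra_simps)
  ultimately show False
    using psd[of "v - t *\<^sub>R w"] expand[of t] by linarith
qed

lemma symmetric_matrix_has_eigenvalue:
  fixes A :: "real^'n^'n"
  assumes symA: "transpose A = A"
  shows "\<exists>l. is_eigenvalue A l"
proof -
  have "sphere (0::real^'n) 1 \<noteq> {}"
    using norm_axis_1 by fastforce
  moreover have "continuous_on (sphere 0 1) (\<lambda>x::real^'n. x \<bullet> (A *v x))"
    by (intro continuous_intros linear_continuous_on matrix_vector_mul_linear)
  ultimately obtain v where v: "v \<in> sphere 0 1"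
    and v_min: "\<And>y. y \<in> sphere 0 1 \<Longrightarrow> v \<bullet> (A *v v) \<le> y \<bullet> (A *v y)"
    using continuous_attains_inf[OF compact_sphere] by blast
  define \<mu> where "\<mu> = v \<bullet> (A *v v)"
  define B where "B = A - \<mu> *\<^sub>R mat 1"
  have "0 \<le> x \<bullet> (B *v x)" for x
  proof (cases "x = 0")
    case False
    define u where "u = (1 / norm x) *\<^sub>R x"
    have "\<mu> \<le> u \<bullet> (A *v u)"
      using v_min[of u] False by (simp add: u_def \<mu>_def)
    also have "\<dots> = (x \<bullet> (A *v x)) / (norm x)\<^sup>2"
      by (simp add: u_def matrix_vector_mult_scaleR power2_eq_square)
    finally show ?thesis
      using False by (simp add: B_def inner_shifted_matrix_vector pos_le_divide_eq
          power2_norm_eq_inner)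
  qed simp
  moreover have "v \<bullet> (B *v v) = 0"
    using v by (simp add: B_def inner_shifted_matrix_vector \<mu>_def
        power2_norm_eq_inner[symmetric])
  moreover have "transpose B = B"
    using symA by (simp add: B_def transpose_diff transpose_scalar)
  ultimately have "B *v v = 0"
    by (rule psd_quadratic_form_zero_imp_kernel[rotated])
  then have "A *v v = \<mu> *\<^sub>R v"
    by (simp add: B_def matrix_vector_mult_diff_rdistrib scaleR_matrix_vector_assoc[symmetric])
  moreover have "v \<noteq> 0"
    using v by auto
  ultimately show ?thesis
    unfolding is_eigenvalue_def by blast
qed

lemma symmetric_matrix_finite_eigenvalues:
  fixes A :: "real^'n^'n"
  assumes symA: "transpose A = A"
  shows "finite {l. is_eigenvalue A l}"
proof -
  let ?E = "{l. is_eigenvalue A l}"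
  define f where "f l = (SOME v. v \<noteq> 0 \<and> A *v v = l *\<^sub>R v)" for l
  have f: "f l \<noteq> 0 \<and> A *v f l = l *\<^sub>R f l" if "l \<in> ?E" for l
    using someI_ex[OF that[unfolded mem_Collect_eq is_eigenvalue_def]] unfolding f_def .
  have "inj_on f ?E"
  proof (rule inj_onI)
    fix l m assume l: "l \<in> ?E" and m: "m \<in> ?E" and "f l = f m"
    then have "l *\<^sub>R f l = m *\<^sub>R f l"
      using f by metis
    then show "l = m"
      using f[OF l] by simp
  qed
  moreover have "pairwise orthogonal (f ` ?E)"
  proof (rule pairwiseI)
    fix x y assume "x \<in> f ` ?E" "y \<in> f ` ?E" "x \<noteq> y"
    then obtain l m where l: "l \<in> ?E" and m: "m \<in> ?E" and xy: "x = f l" "y = f m" "l \<noteq> m"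
      by blast
    have "l * (f l \<bullet> f m) = f m \<bullet> (A *v f l)"
      using f[OF l] by (simp add: inner_commute)
    also have "\<dots> = f l \<bullet> (A *v f m)"
      by (rule inner_matrix_vector_symmetric[OF symA])
    also have "\<dots> = m * (f l \<bullet> f m)"
      using f[OF m] by simp
    finally show "orthogonal x y"
      using xy by (simp add: orthogonal_def)
  qed
  then have "finite (f ` ?E)"
    by (rule pairwise_orthogonal_imp_finite)
  ultimately show ?thesis
    using finite_imageD by blast
qed

lemma lambda_min_is_eigenvalue:
  fixes A :: "real^'n^'n"
  assumes "transpose A = A"
  shows "is_eigenvalue A (lambda_min A)"
  using Min_in[OF symmetric_matrix_finite_eigenvalues[OF assms]]
    symmetric_matrix_has_eigenvalue[OF assms]
  by (auto simp: lambda_min_def)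

lemma is_eigenvalue_unit_eigenvector_inner_nonpos:
  fixes A :: "real^'n^'n"
  assumes "is_eigenvalue A l"
  shows "\<exists>u. u \<bullet> u = 1 \<and> A *v u = l *\<^sub>R u \<and> b \<bullet> u \<le> 0"
proof -
  obtain v where "v \<noteq> 0" and Av: "A *v v = l *\<^sub>R v"
    using assms unfolding is_eigenvalue_def by blast
  define u where "u = ((if b \<bullet> v \<le> 0 then 1 else -1) / norm v) *\<^sub>R v"
  have "u \<bullet> u = 1"
    using \<open>v \<noteq> 0\<close> by (simp add: u_def dot_square_norm power2_eq_square)
  moreover have "A *v u = l *\<^sub>R u"
    by (simp add: u_def matrix_vector_mult_scaleR Av)
  moreover have "b \<bullet> u \<le> 0"
    by (simp add: u_def divide_nonpos_nonneg)
  ultimately show ?thesis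
    by blast
qed

lemma ttrs_obj_add_eigenvector:
  fixes A :: "real^'n^'n"
  assumes "transpose A = A" and Au: "A *v u = \<mu> *\<^sub>R u"
  shows "ttrs_obj A b (y + u) = ttrs_obj A b y + \<mu> / 2 * ((y + u) \<bullet> (y + u) - y \<bullet> y) + b \<bullet> u"
proof -
  have "u \<bullet> (A *v y) = \<mu> * (y \<bullet> u)"
    using inner_matrix_vector_symmetric[OF assms(1), of u y] Au by simp
  then show ?thesis
    by (simp add: ttrs_obj_def Au inner_commute algebra_simps)
qed

lemma exists_nonneg_step_onto_sphere:
  assumes "u \<bullet> u = 1" and "y \<bullet> y \<le> s"
  shows "\<exists>\<tau>\<ge>0. (y + \<tau> *\<^sub>R u) \<bullet> (y + \<tau> *\<^sub>R u) = s"
proof -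
  define c where "c = y \<bullet> u"
  define \<tau> where "\<tau> = sqrt (c\<^sup>2 + (s - y \<bullet> y)) - c"
  \<comment> \<open>the nonnegative root of \<tau>^2 + 2 c \<tau> + y \<bullet> y - s\<close>
  have "\<bar>c\<bar> \<le> sqrt (c\<^sup>2 + (s - y \<bullet> y))"
    using assms(2) by (metis real_sqrt_abs real_sqrt_le_mono le_add_same_cancel1 diff_ge_0_iff_ge)
  then have "\<tau> \<ge> 0"
    by (simp add: \<tau>_def)
  moreover have "(y + \<tau> *\<^sub>R u) \<bullet> (y + \<tau> *\<^sub>R u) = y \<bullet> y + 2 * \<tau> * c + \<tau>\<^sup>2"
    using assms(1) by (simp add: c_def inner_commute power2_eq_square algebra_simps)
  moreover have "(sqrt (c\<^sup>2 + (s - y \<bullet> y)))\<^sup>2 = c\<^sup>2 + (s - y \<bullet> y)"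
    using assms(2) by simp
  then have "2 * \<tau> * c + \<tau>\<^sup>2 = s - y \<bullet> y"
    by (simp add: \<tau>_def power2_eq_square algebra_simps)
  ultimately show ?thesis
    by auto
qed

lemma cttrs_obj_eq:
  "cttrs_obj A b x t = ttrs_obj A b x + lambda_min A / 2 * (t - x \<bullet> x)"
  unfolding cttrs_obj_def ttrs_obj_def inner_shifted_matrix_vector by (simp add: field_simps)

lemma cttrs_feas_iff: "cttrs_feas \<alpha> \<beta> x t \<longleftrightarrow> \<alpha> \<le> t \<and> t \<le> \<beta> \<and> x \<bullet> x \<le> t"
proof -
  have "norm (x, (t - 1) / 2) \<le> (t + 1) / 2 \<longleftrightarrow> 0 \<le> t + 1 \<and> x \<bullet> x + ((t - 1) / 2)\<^sup>2 \<le> ((t + 1) / 2)\<^sup>2"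
    unfolding norm_le_square by (simp add: power2_eq_square)
  also have "\<dots> \<longleftrightarrow> x \<bullet> x \<le> t"
  proof -
    have "((t + 1) / 2)\<^sup>2 = ((t - 1) / 2)\<^sup>2 + t"
      by (simp add: power2_eq_square field_simps)
    moreover have "0 \<le> x \<bullet> x"
      by (rule inner_ge_zero)
    ultimately show ?thesis
      by linarith
  qed
  finally show ?thesis
    by (simp add: cttrs_feas_def)
qed

lemma cttrs_feas_dominated_by_ttrs_feas:
  fixes A :: "real^'n^'n"
  assumes "transpose A = A" and "cttrs_feas \<alpha> \<beta> y s"
  shows "\<exists>z. ttrs_feas \<alpha> \<beta> z \<and> ttrs_obj A b z \<le> cttrs_obj A b y s"
proof -
  obtain u where u: "u \<bullet> u = 1" and Au: "A *v u = lambda_min A *\<^sub>R u" and bu: "b \<bullet> u \<le> 0"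
    using is_eigenvalue_unit_eigenvector_inner_nonpos[OF lambda_min_is_eigenvalue[OF assms(1)]]
    by blast
  obtain \<tau> where "\<tau> \<ge> 0" and z: "(y + \<tau> *\<^sub>R u) \<bullet> (y + \<tau> *\<^sub>R u) = s"
    using exists_nonneg_step_onto_sphere[OF u] assms(2) by (auto simp: cttrs_feas_iff)
  have "ttrs_obj A b (y + \<tau> *\<^sub>R u) = cttrs_obj A b y s + \<tau> * (b \<bullet> u)"
    using ttrs_obj_add_eigenvector[OF assms(1), of "\<tau> *\<^sub>R u" "lambda_min A"] Au z
    by (simp add: matrix_vector_mult_scaleR cttrs_obj_eq)
  moreover have "\<tau> * (b \<bullet> u) \<le> 0"
    using \<open>\<tau> \<ge> 0\<close> bu by (simp add: mult_nonneg_nonpos)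
  ultimately show ?thesis
    using assms(2) z by (auto simp: ttrs_feas_def cttrs_feas_iff)
qed

theorem corollary6:
  fixes A :: "real^'n^'n" and b :: "real^'n" and \<alpha> \<beta> :: real and xs :: "real^'n"
  assumes "transpose A = A"
    and "\<alpha> < \<beta>"
  shows "ttrs_global_sol A b \<alpha> \<beta> xs \<longleftrightarrow> cttrs_global_sol A b \<alpha> \<beta> xs (xs \<bullet> xs)"
proof -
  have lift: "cttrs_feas \<alpha> \<beta> y (y \<bullet> y) \<longleftrightarrow> ttrs_feas \<alpha> \<beta> y"
    and lift_obj: "cttrs_obj A b y (y \<bullet> y) = ttrs_obj A b y" for y
    by (auto simp: cttrs_feas_iff ttrs_feas_def cttrs_obj_eq)
  show ?thesis
  proof
    assume sol: "ttrs_global_sol A b \<alpha> \<beta> xs"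
    have "cttrs_obj A b xs (xs \<bullet> xs) \<le> cttrs_obj A b y s" if "cttrs_feas \<alpha> \<beta> y s" for y s
      using cttrs_feas_dominated_by_ttrs_feas[OF assms(1) that, of b] sol lift_obj
      by (force simp: ttrs_global_sol_def)
    then show "cttrs_global_sol A b \<alpha> \<beta> xs (xs \<bullet> xs)"
      using sol lift by (simp add: ttrs_global_sol_def cttrs_global_sol_def)
  next
    assume "cttrs_global_sol A b \<alpha> \<beta> xs (xs \<bullet> xs)"
    then show "ttrs_global_sol A b \<alpha> \<beta> xs"
      by (auto simp: ttrs_global_sol_def cttrs_global_sol_def lift[symmetric] lift_obj[symmetric])
  qed
qed

end
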